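(* Let $n\ge 3$, $\beta>0$, $\gamma>1$ with $\beta\gamma<n$, let $p,q>0$ and $\sigma_1,\sigma_2\in(-\beta\gamma,\infty)$. Suppose that either (a) $pq\le(\gamma-1)^2$, or (b) $pq>(\gamma-1)^2$ and $\max\{q_0,p_0\}>\frac{n-\beta\gamma}{\gamma-1}$. Then for every pair of double bounded functions $c_1,c_2$, the system $$u(x)=c_1(x)W_{\beta,\gamma}(|y|^{\sigma_1}v^q)(x),\qquad v(x)=c_2(x)W_{\beta,\gamma}(|y|^{\sigma_2}u^p)(x),\qquad x\in\mathbb{R}^n,$$ has no positive solution. If moreover $\gamma\in(1,2]$, the same conclusion holds when $pq>(\gamma-1)^2$ and $\max\{q_0,p_0\}=\frac{n-\beta\gamma}{\gamma-1}$.
   Context: For $f\ge 0$, $f\in L^1_{loc}(\mathbb{R}^n)$, the Wolff potential is $W_{\beta,\gamma}(f)(x)=\int_0^\infty\Big(\frac{\int_{B_t(x)}f(y)\,dy}{t^{n-\beta\gamma}}\Big)^{\frac{1}{\gamma-1}}\frac{dt}{t}$, where $B_t(x)$ is the open ball of radius $t$ centered at $x$. A function $c:\mathbb{R}^n\to\mathbb{R}$ is double bounded if there is $C>0$ with $1/C\le c(x)\le C$ for all $x$. A solution of the system is a pair of nonnegative functions $u,v\in L^1_{loc}(\mathbb{R}^n)$ satisfying both equations for a.e. $x$; it is positive if $u,v>0$. When $pq\neq(\gamma-1)^2$, set $q_0=\frac{\beta\gamma(\gamma-1+q)+(\gamma-1)\sigma_1+\sigma_2 q}{pq-(\gamma-1)^2}$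 and $p_0=\frac{\beta\gamma(\gamma-1+p)+(\gamma-1)\sigma_2+\sigma_1 p}{pq-(\gamma-1)^2}$. *)

theory Defs
  imports "HOL-Analysis.Analysis"
begin

definition locally_integrable :: "('a::euclidean_space \<Rightarrow> real) \<Rightarrow> bool" where
  "locally_integrable f \<longleftrightarrow> f \<in> borel_measurable lebesgue \<and>
     (\<forall>K. compact K \<longrightarrow> set_integrable lebesgue K f)"

definition double_bounded :: "('a \<Rightarrow> real) \<Rightarrow> bool" where
  "double_bounded c \<longleftrightarrow> (\<exists>C>0. \<forall>x. 1 / C \<le> c x \<and> c x \<le> C)"

definition wolff :: "real \<Rightarrow> real \<Rightarrow> ('a::euclidean_space \<Rightarrow> real) \<Rightarrow> 'a \<Rightarrow> ennreal" where
  "wolff \<beta> \<gamma> f x =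
     (\<integral>\<^sup>+ t. indicator {0<..} t *
        (let I = (\<integral>\<^sup>+ y. indicator (ball x t) y * ennreal (f y) \<partial>lebesgue)
         in if I = top then top
            else ennreal ((enn2real I / t powr (real DIM('a) - \<beta> * \<gamma>)) powr (1 / (\<gamma> - 1)) / t))
      \<partial>lborel)"

definition q0 :: "real \<Rightarrow> real \<Rightarrow> real \<Rightarrow> real \<Rightarrow> real \<Rightarrow> real \<Rightarrow> real" where
  "q0 \<beta> \<gamma> p q \<sigma>1 \<sigma>2 =
     (\<beta> * \<gamma> * (\<gamma> - 1 + q) + (\<gamma> - 1) * \<sigma>1 + \<sigma>2 * q) / (p * q - (\<gamma> - 1)\<^sup>2)"

definition p0 :: "real \<Rightarrow> real \<Rightarrow> real \<Rightarrow> real \<Rightarrow> real \<Rightarrow> real \<Rightarrow> real" where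
  "p0 \<beta> \<gamma> p q \<sigma>1 \<sigma>2 =
     (\<beta> * \<gamma> * (\<gamma> - 1 + p) + (\<gamma> - 1) * \<sigma>2 + \<sigma>1 * p) / (p * q - (\<gamma> - 1)\<^sup>2)"

definition positive_solution ::
  "real \<Rightarrow> real \<Rightarrow> real \<Rightarrow> real \<Rightarrow> real \<Rightarrow> real \<Rightarrow> ('a::euclidean_space \<Rightarrow> real) \<Rightarrow> ('a \<Rightarrow> real)
   \<Rightarrow> ('a \<Rightarrow> real) \<Rightarrow> ('a \<Rightarrow> real) \<Rightarrow> bool" where
  "positive_solution \<beta> \<gamma> p q \<sigma>1 \<sigma>2 c1 c2 u v \<longleftrightarrow>
     locally_integrable u \<and> locally_integrable v \<and>
     (\<forall>x. u x > 0) \<and> (\<forall>x. v x > 0) \<and>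
     (AE x in lebesgue.
        ennreal (u x) = ennreal (c1 x) * wolff \<beta> \<gamma> (\<lambda>y. norm y powr \<sigma>1 * v y powr q) x \<and>
        ennreal (v x) = ennreal (c2 x) * wolff \<beta> \<gamma> (\<lambda>y. norm y powr \<sigma>2 * u y powr p) x)"

end

theory Submission
  imports Defs
begin

text \<open>
  For \<open>|x| \<le> T\<close>, integrating the Wolff potential only over \<open>t \<in> (2T, 4T)\<close> gives
  \<open>W(h)(x) \<ge> (\<integral>\<^bsub>B_T\<^esub> h / (4T)^(n-\<beta>\<gamma>))^(1/(\<gamma>-1)) / 2\<close>.  Consequently the ball integrals
  \<open>F(R) = \<integral>\<^bsub>B_R\<^esub> |y|^\<sigma>\<^sub>1 v^q\<close> and \<open>G(R) = \<integral>\<^bsub>B_R\<^esub> |y|^\<sigma>\<^sub>2 u^p\<close> are finite, evaluating the second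
  equation at a single point gives \<open>G(R) = O(R^(n-\<beta>\<gamma>))\<close>, and on \<open>B_R\<close> the functions \<open>u, v\<close> are
  bounded below by powers of \<open>F(R), G(R)\<close>.  Integrating these bounds over the annulus
  \<open>B_R - B_(R/2)\<close> yields \<open>G(R) \<ge> G(R/2) + A R^e G(R)^m\<close> with \<open>m = pq/(\<gamma>-1)\<^sup>2\<close>.  For \<open>m \<le> 1\<close>
  this contradicts the growth bound; for \<open>m > 1\<close> and \<open>e \<ge> 0\<close>, which is what \<open>p\<^sub>0 \<ge> (n-\<beta>\<gamma>)/(\<gamma>-1)\<close>
  amounts to, the increments \<open>A G(R)^m\<close> along \<open>R 2^j\<close> are bounded below, so \<open>G\<close> is unbounded,
  whereas \<open>A G(R)^m \<le> G(R)\<close> bounds it.  In particular the boundary case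
  \<open>max {q\<^sub>0, p\<^sub>0} = (n-\<beta>\<gamma>)/(\<gamma>-1)\<close> is covered for every \<open>\<gamma> > 1\<close>.
\<close>

lemma AE_lebesgue_ex:
  fixes P :: "'a::euclidean_space \<Rightarrow> bool"
  assumes "AE x in lebesgue. P x"
  shows "\<exists>x. P x"
proof (rule ccontr)
  assume "\<nexists>x. P x"
  then have "emeasure lebesgue (UNIV :: 'a set) = 0"
    using AE_E2[OF assms] by simp
  then show False
    by simp
qed

lemma borel_measurable_lebesgue_id [measurable]:
  "(\<lambda>x::'a::euclidean_space. x) \<in> borel_measurable lebesgue"
  by (rule measurable_completion) simp

lemma pred_lebesgue_in_ball [measurable]:
  "Measurable.pred lebesgue (\<lambda>x::'a::euclidean_space. x \<in> ball c r)"
  by (rule measurable_completion) simp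

lemma emeasure_lebesgue_ball:
  fixes c :: "'a::euclidean_space"
  assumes "r \<ge> 0"
  shows "emeasure lebesgue (ball c r) = ennreal (unit_ball_vol (DIM('a)) * r ^ DIM('a))"
  using emeasure_ball[OF assms, of c] by (simp add: emeasure_completion)

lemma emeasure_lebesgue_annulus:
  assumes "R > 0"
  shows "emeasure lebesgue (ball (0::'a::euclidean_space) R - ball 0 (R/2))
     = ennreal (unit_ball_vol (DIM('a)) * (1 - (1/2) ^ DIM('a)) * R ^ DIM('a))"
proof -
  have "emeasure lebesgue (ball (0::'a) R - ball 0 (R/2))
      = emeasure lebesgue (ball (0::'a) R) - emeasure lebesgue (ball (0::'a) (R/2))"
    using assms emeasure_lebesgue_ball[of "R/2" "0::'a"] by (intro emeasure_Diff) auto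
  also have "\<dots> = ennreal (unit_ball_vol (DIM('a)) * R ^ DIM('a) - unit_ball_vol (DIM('a)) * (R/2) ^ DIM('a))"
    using assms emeasure_lebesgue_ball[of "R/2" "0::'a"] emeasure_lebesgue_ball[of R "0::'a"]
    by (simp add: ennreal_minus del: emeasure_completion)
  finally show ?thesis
    by (simp add: power_divide algebra_simps)
qed

lemma annulus_volume_pos:
  "R > 0 \<Longrightarrow> unit_ball_vol (DIM('a::euclidean_space)) * (1 - (1/2) ^ DIM('a)) * R ^ DIM('a) > 0"
  by (simp add: power_less_one_iff)

definition ball_integral :: "('a::euclidean_space \<Rightarrow> real) \<Rightarrow> real \<Rightarrow> ennreal" where
  "ball_integral h R = (\<integral>\<^sup>+ y. indicator (ball 0 R) y * ennreal (h y) \<partial>lebesgue)"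

lemma ball_integral_mono: "R \<le> T \<Longrightarrow> ball_integral h R \<le> ball_integral h T"
  unfolding ball_integral_def
  by (intro nn_integral_mono) (auto split: split_indicator)

lemma ball_integral_pos:
  fixes h :: "'a::euclidean_space \<Rightarrow> real"
  assumes hm: "h \<in> borel_measurable lebesgue" and hpos: "\<And>y. y \<noteq> 0 \<Longrightarrow> h y > 0" and R: "R > 0"
  shows "ball_integral h R > 0"
proof (rule ccontr)
  define S where "S = ball (0::'a) R - ball 0 (R/2)"
  assume "\<not> ?thesis"
  then have "(\<integral>\<^sup>+ y. indicator (ball 0 R) y * ennreal (h y) \<partial>lebesgue) = 0"
    by (simp add: ball_integral_def not_gr_zero)
  moreover have "(\<lambda>y. indicator (ball 0 R) y * ennreal (h y)) \<in> borel_measurable lebesgue"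
    using hm by measurable
  ultimately have "AE y in lebesgue. indicator (ball 0 R) y * ennreal (h y) = 0"
    by (simp add: nn_integral_0_iff_AE)
  then have "AE y in lebesgue. y \<notin> S"
  proof eventually_elim
    case (elim y)
    show "y \<notin> S"
    proof
      assume "y \<in> S"
      then have "y \<noteq> 0" "y \<in> ball 0 R"
        using R by (auto simp: S_def)
      with elim hpos[of y] show False
        by simp
    qed
  qed
  then have "emeasure lebesgue S = 0"
    by (simp add: AE_iff_null_sets null_setsD1 S_def)
  with emeasure_lebesgue_annulus[OF R, where 'a='a] annulus_volume_pos[OF R, where 'a='a]
  show False
    unfolding S_def by (metis ennreal_eq_0_iff not_le)
qed

lemma ball_integral_annulus_lower_bound:
  fixes h :: "'a::euclidean_space \<Rightarrow> real"
  assumes hm: "h \<in> borel_measurable lebesgue" and R: "R > 0" and c: "c \<ge> 0"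
    and low: "AE y in lebesgue. R/2 \<le> norm y \<and> norm y < R \<longrightarrow> c \<le> h y"
  shows "ball_integral h R \<ge>
    ball_integral h (R/2) + ennreal (c * (unit_ball_vol (DIM('a)) * (1 - (1/2) ^ DIM('a)) * R ^ DIM('a)))"
proof -
  define S where "S = ball (0::'a) R - ball 0 (R/2)"
  have split: "indicator (ball 0 R) y * ennreal (h y) =
      indicator (ball 0 (R/2)) y * ennreal (h y) + indicator S y * ennreal (h y)" for y :: 'a
    using R by (auto simp: S_def split: split_indicator)
  have "ball_integral h R = ball_integral h (R/2) + (\<integral>\<^sup>+ y. indicator S y * ennreal (h y) \<partial>lebesgue)"
    unfolding ball_integral_def split
    by (intro nn_integral_add borel_measurable_times_ennreal borel_measurable_indicator
        measurable_compose[OF hm measurable_ennreal]) (simp_all add: S_def)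
  moreover have "(\<integral>\<^sup>+ y. ennreal c * indicator S y \<partial>lebesgue) \<le> (\<integral>\<^sup>+ y. indicator S y * ennreal (h y) \<partial>lebesgue)"
    using low by (intro nn_integral_mono_AE, eventually_elim)
      (auto simp: S_def split: split_indicator intro: ennreal_leI)
  moreover have "(\<integral>\<^sup>+ y. ennreal c * indicator S y \<partial>lebesgue) = ennreal c * emeasure lebesgue S"
    by (rule nn_integral_cmult_indicator) (simp add: S_def)
  ultimately show ?thesis
    using emeasure_lebesgue_annulus[OF R, where 'a='a] c
    by (simp add: S_def ennreal_mult' add_left_mono del: emeasure_completion)
qed

lemma wolff_integrand_mono:
  fixes I0 I :: ennreal and s t d k :: real
  assumes I: "I0 \<le> I" and t: "0 < t" "t \<le> s" and d: "d \<ge> 0" and k: "k > 0"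
  shows "(if I0 = top then top else ennreal ((enn2real I0 / s powr d) powr k / s))
    \<le> (if I = top then top else ennreal ((enn2real I / t powr d) powr k / t))"
proof (cases "I = top")
  case False
  then have I0: "I0 \<noteq> top" using I top_unique by metis
  have "enn2real I0 \<le> enn2real I"
    using I False enn2real_mono top.not_eq_extremum by blast
  moreover have "t powr d \<le> s powr d"
    using t d by (intro powr_mono2) auto
  ultimately have "enn2real I0 / s powr d \<le> enn2real I / t powr d"
    using t by (intro frac_le) auto
  then have "(enn2real I0 / s powr d) powr k \<le> (enn2real I / t powr d) powr k"
    using k by (intro powr_mono2) auto
  then have "(enn2real I0 / s powr d) powr k / s \<le> (enn2real I / t powr d) powr k / t"
    using t by (intro frac_le) auto
  then show ?thesis
    using False I0 by (simp add: ennreal_leI)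
qed simp

lemma wolff_ge_ball_integral:
  fixes h :: "'a::euclidean_space \<Rightarrow> real"
  assumes T: "T > 0" "norm x \<le> T" and n: "real DIM('a) - \<beta> * \<gamma> > 0" and \<gamma>: "\<gamma> > 1"
  shows "wolff \<beta> \<gamma> h x \<ge> (if ball_integral h T = top then top else
     ennreal ((enn2real (ball_integral h T) / (4*T) powr (real DIM('a) - \<beta> * \<gamma>)) powr (1/(\<gamma>-1)) / 2))"
proof -
  define d where "d = real DIM('a) - \<beta> * \<gamma>"
  have d: "d \<ge> 0" using n by (simp add: d_def)
  define I0 where "I0 = ball_integral h T"
  define X where "X = (enn2real I0 / (4*T) powr d) powr (1/(\<gamma>-1))"
  define c where "c = (if I0 = top then top else ennreal (X / (4*T)))"
  have pointwise: "indicator {2*T<..<4*T} t * c \<le> indicator {0<..} t *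
        (let I = (\<integral>\<^sup>+ y. indicator (ball x t) y * ennreal (h y) \<partial>lebesgue)
         in if I = top then top else ennreal ((enn2real I / t powr d) powr (1 / (\<gamma> - 1)) / t))" for t
  proof (cases "t \<in> {2*T<..<4*T}")
    case True
    then have t: "2*T < t" "t < 4*T" "t > 0" using T by auto
    have "ball 0 T \<subseteq> ball x t"
    proof
      fix y :: 'a
      assume "y \<in> ball 0 T"
      then show "y \<in> ball x t"
        using T t norm_triangle_ineq4[of x y] by (simp add: dist_norm)
    qed
    then have "I0 \<le> (\<integral>\<^sup>+ y. indicator (ball x t) y * ennreal (h y) \<partial>lebesgue)"
      unfolding I0_def ball_integral_def by (intro nn_integral_mono) (auto split: split_indicator)
    with t d \<gamma> have "c \<le> (let I = (\<integral>\<^sup>+ y. indicator (ball x t) y * ennreal (h y) \<partial>lebesgue)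
        in if I = top then top else ennreal ((enn2real I / t powr d) powr (1 / (\<gamma> - 1)) / t))"
      unfolding c_def X_def Let_def by (intro wolff_integrand_mono) auto
    with True show ?thesis
      by simp
  qed simp
  have "(\<integral>\<^sup>+ t. indicator {2*T<..<4*T} t * c \<partial>lborel) \<le> wolff \<beta> \<gamma> h x"
    unfolding wolff_def d_def[symmetric] by (rule nn_integral_mono) (rule pointwise)
  moreover have "(\<integral>\<^sup>+ t. indicator {2*T<..<4*T} t * c \<partial>lborel) = c * ennreal (2*T)"
    using T by (subst mult.commute, subst nn_integral_cmult_indicator) auto
  moreover have "c * ennreal (2*T) = (if I0 = top then top else ennreal (X/2))"
    using T by (auto simp: c_def X_def ennreal_mult''[symmetric] ennreal_top_mult)
  ultimately show ?thesis
    by (cases "I0 = top") (auto simp: X_def d_def I0_def)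
qed

lemma solution_ge_ball_integral:
  fixes h :: "'a::euclidean_space \<Rightarrow> real"
  assumes u: "u x \<ge> 0" and eq: "ennreal (u x) = ennreal (c x) * wolff \<beta> \<gamma> h x"
    and C: "C > 0" "c x \<ge> 1/C" and d: "real DIM('a) - \<beta> * \<gamma> > 0" and \<gamma>: "\<gamma> > 1"
  shows "\<forall>T>0. norm x \<le> T \<longrightarrow> ball_integral h T \<noteq> top \<and>
    u x \<ge> (1/C) * ((enn2real (ball_integral h T) / (4*T) powr (real DIM('a) - \<beta> * \<gamma>)) powr (1/(\<gamma>-1)) / 2)"
proof (intro allI impI)
  fix T :: real
  assume T: "T > 0" "norm x \<le> T"
  define Y where "Y = (enn2real (ball_integral h T) / (4*T) powr (real DIM('a) - \<beta> * \<gamma>)) powr (1/(\<gamma>-1)) / 2"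
  have Y: "Y \<ge> 0" by (simp add: Y_def)
  have cx: "c x > 0" using C by (smt (verit) divide_pos_pos)
  have W: "wolff \<beta> \<gamma> h x \<ge> (if ball_integral h T = top then top else ennreal Y)"
    unfolding Y_def by (rule wolff_ge_ball_integral[OF T d \<gamma>])
  have fin: "ball_integral h T \<noteq> top"
  proof
    assume "ball_integral h T = top"
    then have "wolff \<beta> \<gamma> h x = top" using W by (simp add: top_unique)
    then have "ennreal (u x) = top" using eq cx by (simp add: ennreal_mult_top)
    then show False by simp
  qed
  have "ennreal (c x * Y) = ennreal (c x) * ennreal Y" using cx Y by (simp add: ennreal_mult)
  also have "\<dots> \<le> ennreal (c x) * wolff \<beta> \<gamma> h x" using W fin by (intro mult_left_mono) auto
  finally have "ennreal (c x * Y) \<le> ennreal (u x)"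
    using eq by simp
  then have "c x * Y \<le> u x"
    using u by (simp add: ennreal_le_iff)
  moreover have "(1/C) * Y \<le> c x * Y" using C Y by (intro mult_right_mono) auto
  ultimately show "ball_integral h T \<noteq> top \<and> u x \<ge> (1/C) * Y"
    using fin by simp
qed

lemma powr_ge_on_annulus:
  fixes R t s :: real
  assumes "R > 0" "R/2 \<le> t" "t < R"
  shows "min (2 powr (-s)) 1 * R powr s \<le> t powr s"
proof (cases "s \<ge> 0")
  case True
  have "min (2 powr (-s)) 1 * R powr s \<le> 2 powr (-s) * R powr s"
    by (intro mult_right_mono) auto
  also have "\<dots> = (R/2) powr s"
    using assms by (simp add: powr_divide powr_minus_divide)
  also have "\<dots> \<le> t powr s"
    using assms True by (intro powr_mono2) auto
  finally show ?thesis .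
next
  case False
  have "min (2 powr (-s)) 1 * R powr s \<le> R powr s"
    using mult_right_mono[of "min (2 powr (-s)) 1" 1 "R powr s"] by simp
  also have "\<dots> \<le> t powr s"
    using assms False by (intro powr_mono2') auto
  finally show ?thesis .
qed

lemma le_of_wolff_lower_bound:
  fixes G T C w \<gamma> d :: real
  assumes G: "G \<ge> 0" and T: "T > 0" and C: "C > 0" and \<gamma>: "\<gamma> > 1"
    and w: "w \<ge> (1/C) * ((G / (4*T) powr d) powr (1/(\<gamma>-1)) / 2)"
  shows "G \<le> (2*C*w) powr (\<gamma>-1) * 4 powr d * T powr d"
proof -
  define X where "X = G / (4*T) powr d"
  have X: "X \<ge> 0" using G by (simp add: X_def)
  have "X powr (1/(\<gamma>-1)) \<le> 2*C*w"
    using w C by (simp add: X_def field_simps)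
  then have "(X powr (1/(\<gamma>-1))) powr (\<gamma>-1) \<le> (2*C*w) powr (\<gamma>-1)"
    using \<gamma> by (intro powr_mono2) auto
  then have "X \<le> (2*C*w) powr (\<gamma>-1)"
    using \<gamma> X by (simp add: powr_powr)
  then show ?thesis
    using T by (simp add: X_def field_simps powr_mult)
qed

text \<open>
  \<open>a\<^sub>1, a\<^sub>2\<close> are the exponents of \<open>R\<close> in the two annulus estimates; \<open>m = pqk\<^sup>2\<close> and \<open>e = a\<^sub>2 + pk a\<^sub>1\<close>
  are the exponents in the combined inequality \<open>G(R) \<ge> G(R/2) + A R^e G(R)^m\<close>.
\<close>
lemma exponent_condition:
  fixes \<beta> \<gamma> p q \<sigma>1 \<sigma>2 n :: real
  assumes \<gamma>: "\<gamma> > 1" and p: "p > 0" and \<sigma>1: "\<sigma>1 > -(\<beta>*\<gamma>)" and \<sigma>2: "\<sigma>2 > -(\<beta>*\<gamma>)"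
  defines "d \<equiv> n - \<beta>*\<gamma>" and "k \<equiv> 1/(\<gamma>-1)"
  defines "a1 \<equiv> n + \<sigma>1 - d*k*q" and "a2 \<equiv> n + \<sigma>2 - d*k*p"
  assumes cond: "p*q \<le> (\<gamma>-1)\<^sup>2 \<or> (p*q > (\<gamma>-1)\<^sup>2 \<and> p0 \<beta> \<gamma> p q \<sigma>1 \<sigma>2 \<ge> d/(\<gamma>-1))"
  shows "(p*q*k\<^sup>2 \<le> 1 \<and> a2 + p*k*a1 > d*(1 - p*q*k\<^sup>2)) \<or> (p*q*k\<^sup>2 > 1 \<and> a2 + p*k*a1 \<ge> 0)"
proof -
  have \<gamma>1: "\<gamma> - 1 > 0" using \<gamma> by simp
  have k\<gamma>: "k * (\<gamma>-1) = 1" using \<gamma>1 by (simp add: k_def)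
  have "p*q*k\<^sup>2 * (\<gamma>-1)\<^sup>2 = p*q"
    using k\<gamma> by (simp add: power_mult_distrib[symmetric])
  then have m_iff: "p*q*k\<^sup>2 \<le> 1 \<longleftrightarrow> p*q \<le> (\<gamma>-1)\<^sup>2"
    using \<gamma>1 by (metis mult_le_cancel_right_pos mult_1 mult.commute zero_less_power)
  have "a1*(\<gamma>-1) = (n+\<sigma>1)*(\<gamma>-1) - d*q*(k*(\<gamma>-1))"
    and "a2*(\<gamma>-1) = (n+\<sigma>2)*(\<gamma>-1) - d*p*(k*(\<gamma>-1))"
    by (simp_all add: a1_def a2_def algebra_simps)
  then have a1: "a1*(\<gamma>-1) = (n+\<sigma>1)*(\<gamma>-1) - d*q" and a2: "a2*(\<gamma>-1) = (n+\<sigma>2)*(\<gamma>-1) - d*p"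
    unfolding k\<gamma> by simp_all
  show ?thesis
  proof (cases "p*q \<le> (\<gamma>-1)\<^sup>2")
    case True
    have "a2 + p*k*a1 - d*(1 - p*q*k\<^sup>2) = \<beta>*\<gamma> + \<sigma>2 + p*k*(\<beta>*\<gamma> + \<sigma>1)"
      by (simp add: a1_def a2_def d_def algebra_simps power2_eq_square)
    moreover have "\<beta>*\<gamma> + \<sigma>2 + p*k*(\<beta>*\<gamma> + \<sigma>1) > 0"
      using \<sigma>1 \<sigma>2 p \<gamma>1 by (simp add: k_def add_pos_pos)
    ultimately show ?thesis
      using True m_iff by auto
  next
    case False
    with cond have "p0 \<beta> \<gamma> p q \<sigma>1 \<sigma>2 \<ge> d/(\<gamma>-1)" by auto
    with False \<gamma>1 have "(\<gamma>-1) * (\<beta>*\<gamma>*(\<gamma>-1+p) + (\<gamma>-1)*\<sigma>2 + \<sigma>1*p) - d*(p*q - (\<gamma>-1)\<^sup>2) \<ge> 0"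
      by (simp add: p0_def field_simps)
    also have "(\<gamma>-1) * (\<beta>*\<gamma>*(\<gamma>-1+p) + (\<gamma>-1)*\<sigma>2 + \<sigma>1*p) - d*(p*q - (\<gamma>-1)\<^sup>2)
        = (\<gamma>-1) * (a2*(\<gamma>-1)) + p * (k*(\<gamma>-1)) * (a1*(\<gamma>-1))"
      unfolding a1 a2 k\<gamma> by (simp add: d_def power2_eq_square algebra_simps)
    also have "\<dots> = (\<gamma>-1)\<^sup>2 * (a2 + p*k*a1)"
      by (simp add: power2_eq_square algebra_simps)
    finally have "a2 + p*k*a1 \<ge> 0"
      using \<gamma>1 by (simp add: zero_le_mult_iff)
    then show ?thesis
      using False m_iff by auto
  qed
qed

lemma sublinear_growth_contradiction:
  fixes G :: "real \<Rightarrow> real"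
  assumes A: "A > 0" and K: "K > 0" and m: "m \<le> 1" and e: "e > d*(1-m)" and R0: "R0 > 0"
    and pos: "\<And>R. R \<ge> R0 \<Longrightarrow> G R > 0"
    and lower: "\<And>R. R \<ge> R0 \<Longrightarrow> A * R powr e * G R powr m \<le> G R"
    and upper: "\<And>R. R \<ge> R0 \<Longrightarrow> G R \<le> K * R powr d"
  shows False
proof -
  define \<delta> where "\<delta> = e - d*(1-m)"
  have \<delta>: "\<delta> > 0" using e by (simp add: \<delta>_def)
  define R where "R = max R0 ((K powr (1-m) / A + 1) powr (1/\<delta>))"
  have R: "R \<ge> R0" "R > 0" using R0 by (auto simp: R_def)
  have "A * R powr e \<le> G R powr (1 - m)"
    using lower[OF R(1)] pos[OF R(1)] by (simp add: powr_diff field_simps)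
  also have "\<dots> \<le> (K * R powr d) powr (1-m)"
    using upper[OF R(1)] pos[OF R(1)] m by (intro powr_mono2) auto
  also have "\<dots> = K powr (1-m) * R powr (d*(1-m))"
    using K R by (simp add: powr_mult powr_powr)
  finally have "R powr e / R powr (d*(1-m)) \<le> K powr (1-m) / A"
    using A R by (simp add: field_simps)
  then have "R powr \<delta> \<le> K powr (1-m) / A"
    by (simp add: \<delta>_def powr_diff)
  moreover have "K powr (1-m) / A + 1 \<le> R powr \<delta>"
  proof -
    have "K powr (1-m) / A + 1 = ((K powr (1-m) / A + 1) powr (1/\<delta>)) powr \<delta>"
      using \<delta> A by (simp add: powr_powr)
    also have "\<dots> \<le> R powr \<delta>"
      using \<delta> A by (intro powr_mono2) (auto simp: R_def)
    finally show ?thesis .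
  qed
  ultimately show False by simp
qed

lemma superlinear_doubling_contradiction:
  fixes G :: "real \<Rightarrow> real"
  assumes A: "A > 0" and m: "m > 1" and R0: "R0 > 0"
    and pos: "\<And>R. R > 0 \<Longrightarrow> G R > 0"
    and doubling: "\<And>R. R \<ge> R0 \<Longrightarrow> G (R/2) + A * G R powr m \<le> G R"
  shows False
proof -
  have bounded: "G R \<le> (1/A) powr (1/(m-1))" if R: "R \<ge> R0" for R
  proof -
    have GR: "G R > 0" using pos R R0 by simp
    have "A * G R powr m \<le> G R" using doubling[OF R] pos[of "R/2"] R R0 by linarith
    then have "G R powr (m - 1) \<le> 1/A" using GR A by (simp add: powr_diff field_simps)
    then have "(G R powr (m - 1)) powr (1/(m-1)) \<le> (1/A) powr (1/(m-1))"
      using m GR by (intro powr_mono2) auto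
    then show ?thesis using m GR by (simp add: powr_powr)
  qed
  define g where "g = G R0"
  have g: "g > 0" using pos R0 by (simp add: g_def)
  \<comment> \<open>Each doubling step adds at least \<open>A g^m\<close>, since \<open>G\<close> stays above \<open>g\<close>.\<close>
  have grow: "G (R0 * 2^j) \<ge> g + j * (A * g powr m)" for j :: nat
  proof (induction j)
    case 0
    then show ?case by (simp add: g_def)
  next
    case (Suc j)
    have "(1::real) \<le> 2^Suc j"
      by (rule one_le_power) simp
    then have step: "G (R0 * 2^j) + A * G (R0 * 2^Suc j) powr m \<le> G (R0 * 2^Suc j)"
      using doubling[of "R0 * 2^Suc j"] R0 by simp
    have "A * g powr m \<ge> 0" using A g by simp
    then have "G (R0 * 2^Suc j) \<ge> g"
      using step Suc.IH A by (smt (verit) of_nat_0_le_iff mult_nonneg_nonneg powr_ge_zero)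
    then have "A * G (R0 * 2^Suc j) powr m \<ge> A * g powr m"
      using A g m by (simp add: powr_mono2)
    then show ?case
      using step Suc.IH by (simp add: algebra_simps)
  qed
  obtain j :: nat where j: "real j > (1/A) powr (1/(m-1)) / (A * g powr m)"
    using reals_Archimedean2 by blast
  then have "j * (A * g powr m) > (1/A) powr (1/(m-1))"
    using A g by (simp add: field_simps)
  moreover have "G (R0 * 2^j) \<le> (1/A) powr (1/(m-1))"
    using R0 by (intro bounded) simp
  ultimately show False
    using grow[of j] g by linarith
qed

lemma coupled_doubling_contradiction:
  fixes F G :: "real \<Rightarrow> real"
  assumes k: "k > 0" and p: "p > 0"
    and A1: "A1 > 0" and A2: "A2 > 0" and K: "K > 0" and R0: "R0 > 0"
    and F_ge: "\<And>R. R \<ge> R0 \<Longrightarrow> A1 * R powr a1 * G R powr (q*k) \<le> F R"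
    and G_ge: "\<And>R. R \<ge> R0 \<Longrightarrow> G (R/2) + A2 * R powr a2 * F R powr (p*k) \<le> G R"
    and pos: "\<And>R. R > 0 \<Longrightarrow> G R > 0"
    and upper: "\<And>R. R \<ge> R0 \<Longrightarrow> G R \<le> K * R powr d"
    and cond: "(p*q*k\<^sup>2 \<le> 1 \<and> a2 + p*k*a1 > d*(1 - p*q*k\<^sup>2)) \<or> (p*q*k\<^sup>2 > 1 \<and> a2 + p*k*a1 \<ge> 0)"
  shows False
proof -
  define m where "m = p*q*k\<^sup>2"
  define e where "e = a2 + p*k*a1"
  define A where "A = A2 * A1 powr (p*k)"
  have A: "A > 0" using A1 A2 by (simp add: A_def)
  have doubling: "G (R/2) + A * R powr e * G R powr m \<le> G R" if R: "R \<ge> R0" for R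
  proof -
    have "R > 0" "G R > 0" using R R0 pos by auto
    then have "A1 powr (p*k) * R powr (a1*(p*k)) * G R powr m = (A1 * R powr a1 * G R powr (q*k)) powr (p*k)"
      using A1 by (simp add: powr_mult powr_powr m_def power2_eq_square mult_ac)
    also have "\<dots> \<le> F R powr (p*k)"
      using F_ge[OF R] A1 \<open>G R > 0\<close> p k by (intro powr_mono2) auto
    finally have "A * R powr e * G R powr m \<le> A2 * R powr a2 * F R powr (p*k)"
      using A2 by (simp add: A_def e_def powr_add mult_ac mult_left_mono)
    then show ?thesis
      using G_ge[OF R] by linarith
  qed
  from cond consider (sublinear) "m \<le> 1" "e > d*(1-m)" | (superlinear) "m > 1" "e \<ge> 0"
    by (auto simp: m_def e_def)
  then show False
  proof cases
    case sublinear
    show False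
    proof (rule sublinear_growth_contradiction[OF A K sublinear R0 _ _ upper])
      show "G R > 0" if "R \<ge> R0" for R
        using pos that R0 by simp
      show "A * R powr e * G R powr m \<le> G R" if "R \<ge> R0" for R
        using doubling[OF that] pos[of "R/2"] that R0 by linarith
    qed
  next
    case superlinear
    show False
    proof (rule superlinear_doubling_contradiction[OF A superlinear(1) _ pos])
      show "max R0 1 > 0" by simp
      show "G (R/2) + A * G R powr m \<le> G R" if R: "R \<ge> max R0 1" for R
      proof -
        have "1 \<le> R powr e"
          using R superlinear(2) by (simp add: ge_one_powr_ge_zero)
        then have "A * G R powr m \<le> A * R powr e * G R powr m"
          using A by (simp add: mult_right_mono mult_left_mono)
        then show ?thesis
          using doubling[of R] R by linarith
      qed
    qed
  qed
qed

lemma powr_wolff_bound_eq: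
  fixes R G C d k q :: real
  assumes R: "R > 0" and G: "G > 0"
  shows "((1/C) * ((G / (4*R) powr d) powr k / 2)) powr q
    = (1/(2*C)) powr q * 4 powr (-(d*k*q)) * R powr (-(d*k*q)) * G powr (q*k)"
proof -
  have "(1/C) * ((G / (4*R) powr d) powr k / 2) = (1/(2*C)) * (G powr k * (4*R) powr (-(d*k)))"
    using R G by (simp add: powr_divide powr_powr powr_minus_divide)
  also have "\<dots> powr q = (1/(2*C)) powr q * ((G powr k) powr q * ((4*R) powr (-(d*k))) powr q)"
    by (simp only: powr_mult)
  finally show ?thesis
    using R by (simp add: powr_powr powr_mult mult_ac)
qed

lemma ball_integral_doubling_step:
  fixes w :: "'a::euclidean_space \<Rightarrow> real" and Z :: "real \<Rightarrow> real" and q \<sigma> C d k :: real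
  defines "I \<equiv> ball_integral (\<lambda>y. norm y powr \<sigma> * w y powr q)"
  assumes wm: "w \<in> borel_measurable lebesgue" and q: "q > 0" and C: "C > 0"
    and lower: "AE y in lebesgue. \<forall>T>0. norm y \<le> T \<longrightarrow> w y \<ge> (1/C) * ((Z T / (4*T) powr d) powr k / 2)"
  obtains A where "A > 0"
    and "\<And>R. R > 0 \<Longrightarrow> Z R > 0 \<Longrightarrow> I R \<noteq> top \<Longrightarrow>
      enn2real (I (R/2)) + A * R powr (real DIM('a) + \<sigma> - d*k*q) * Z R powr (q*k) \<le> enn2real (I R)"
proof
  define vol where "vol = unit_ball_vol (DIM('a)) * (1 - (1/2) ^ DIM('a))"
  show "min (2 powr (-\<sigma>)) 1 * (1/(2*C)) powr q * 4 powr (-(d*k*q)) * vol > 0"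
    using C annulus_volume_pos[of 1, where 'a='a] by (simp add: vol_def)
  fix R assume R: "R > 0" and Z: "Z R > 0" and fin: "I R \<noteq> top"
  define V where "V = (1/C) * ((Z R / (4*R) powr d) powr k / 2)"
  define c where "c = min (2 powr (-\<sigma>)) 1 * R powr \<sigma> * V powr q"
  have c: "c \<ge> 0" by (simp add: c_def)
  have low: "AE y in lebesgue. R/2 \<le> norm y \<and> norm y < R \<longrightarrow> c \<le> norm y powr \<sigma> * w y powr q"
    using lower
  proof eventually_elim
    case (elim y)
    show ?case
    proof
      assume y: "R/2 \<le> norm y \<and> norm y < R"
      have "V \<le> w y" using elim y R by (simp add: V_def)
      then have "V powr q \<le> w y powr q"
        using C q by (intro powr_mono2) (auto simp: V_def)
      moreover have "min (2 powr (-\<sigma>)) 1 * R powr \<sigma> \<le> norm y powr \<sigma>"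
        using powr_ge_on_annulus[of R "norm y" \<sigma>] y R by simp
      ultimately show "c \<le> norm y powr \<sigma> * w y powr q"
        unfolding c_def by (simp add: mult_mono)
    qed
  qed
  have "(\<lambda>y. norm y powr \<sigma> * w y powr q) \<in> borel_measurable lebesgue"
    using wm by measurable
  then have annulus: "I R \<ge> I (R/2) + ennreal (c * (vol * R ^ DIM('a)))"
    unfolding I_def vol_def by (rule ball_integral_annulus_lower_bound[OF _ R c low])
  have "I (R/2) \<le> I R"
    using R by (simp add: I_def ball_integral_mono)
  then have "I (R/2) \<noteq> top"
    using fin by (auto simp: top_unique)
  moreover have "c * (vol * R ^ DIM('a)) \<ge> 0"
    using c annulus_volume_pos[OF R, where 'a='a] by (simp add: vol_def mult.assoc)
  ultimately have "enn2real (I (R/2)) + c * (vol * R ^ DIM('a)) \<le> enn2real (I R)"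
    using enn2real_mono[OF annulus] fin by (simp add: enn2real_plus less_top)
  moreover have "c * (vol * R ^ DIM('a)) = min (2 powr (-\<sigma>)) 1 * (1/(2*C)) powr q * 4 powr (-(d*k*q)) * vol
      * R powr (real DIM('a) + \<sigma> - d*k*q) * Z R powr (q*k)"
    unfolding c_def V_def powr_wolff_bound_eq[OF R Z]
    using R by (simp add: powr_add powr_diff powr_minus powr_realpow field_simps)
  ultimately show "enn2real (I (R/2)) + min (2 powr (-\<sigma>)) 1 * (1/(2*C)) powr q * 4 powr (-(d*k*q)) * vol
      * R powr (real DIM('a) + \<sigma> - d*k*q) * Z R powr (q*k) \<le> enn2real (I R)"
    by simp
qed

lemma ball_integral_finite_and_growth:
  fixes h w :: "'a::euclidean_space \<Rightarrow> real"
  assumes lower: "AE x in lebesgue. \<forall>T>0. norm x \<le> T \<longrightarrow> ball_integral h T \<noteq> top \<and>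
      w x \<ge> (1/C) * ((enn2real (ball_integral h T) / (4*T) powr d) powr (1/(\<gamma>-1)) / 2)"
    and w: "\<And>x. w x > 0" and C: "C > 0" and \<gamma>: "\<gamma> > 1"
  shows "\<And>R. ball_integral h R \<noteq> top"
    and "\<exists>K R0. K > 0 \<and> R0 > 0 \<and> (\<forall>R\<ge>R0. enn2real (ball_integral h R) \<le> K * R powr d)"
proof -
  obtain x0 where x0: "\<forall>T>0. norm x0 \<le> T \<longrightarrow> ball_integral h T \<noteq> top \<and>
      w x0 \<ge> (1/C) * ((enn2real (ball_integral h T) / (4*T) powr d) powr (1/(\<gamma>-1)) / 2)"
    using AE_lebesgue_ex[OF lower] by blast
  show "ball_integral h R \<noteq> top" for R
  proof -
    define T where "T = max 1 (max R (norm x0))"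
    have "ball_integral h T \<noteq> top"
      using x0 by (simp add: T_def)
    moreover have "ball_integral h R \<le> ball_integral h T"
      by (simp add: T_def ball_integral_mono)
    ultimately show ?thesis
      by (auto simp: top_unique)
  qed
  have "enn2real (ball_integral h R) \<le> (2*C*w x0) powr (\<gamma>-1) * 4 powr d * R powr d"
    if R: "R \<ge> max 1 (norm x0)" for R
    using R x0 C \<gamma> by (intro le_of_wolff_lower_bound) auto
  moreover have "(2*C*w x0) powr (\<gamma>-1) * 4 powr d > 0"
    using C w[of x0] by simp
  ultimately show "\<exists>K R0. K > 0 \<and> R0 > 0 \<and> (\<forall>R\<ge>R0. enn2real (ball_integral h R) \<le> K * R powr d)"
    by (intro exI[of _ "(2*C*w x0) powr (\<gamma>-1) * 4 powr d"] exI[of _ "max 1 (norm x0)"]) auto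
qed

lemma no_positive_solution_if_p0_large:
  fixes \<beta> \<gamma> p q \<sigma>1 \<sigma>2 :: real and c1 c2 u v :: "'a::euclidean_space \<Rightarrow> real"
  assumes n: "\<beta> * \<gamma> < real DIM('a)" and \<gamma>: "\<gamma> > 1" and p: "p > 0" and q: "q > 0"
    and \<sigma>1: "\<sigma>1 > - (\<beta> * \<gamma>)" and \<sigma>2: "\<sigma>2 > - (\<beta> * \<gamma>)"
    and cond: "p * q \<le> (\<gamma> - 1)\<^sup>2 \<or>
      (p * q > (\<gamma> - 1)\<^sup>2 \<and> p0 \<beta> \<gamma> p q \<sigma>1 \<sigma>2 \<ge> (real DIM('a) - \<beta> * \<gamma>) / (\<gamma> - 1))"
    and "double_bounded c1" and "double_bounded c2"
    and sol: "positive_solution \<beta> \<gamma> p q \<sigma>1 \<sigma>2 c1 c2 u v"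
  shows False
proof -
  define d where "d = real DIM('a) - \<beta> * \<gamma>"
  define k where "k = 1 / (\<gamma> - 1)"
  have k: "k > 0" using \<gamma> by (simp add: k_def)
  define f where "f = (\<lambda>y::'a. norm y powr \<sigma>1 * v y powr q)"
  define h where "h = (\<lambda>y::'a. norm y powr \<sigma>2 * u y powr p)"
  from sol have u: "\<And>x. u x > 0" and v: "\<And>x. v x > 0"
    and um: "u \<in> borel_measurable lebesgue" and vm: "v \<in> borel_measurable lebesgue"
    and eqs: "AE x in lebesgue.
        ennreal (u x) = ennreal (c1 x) * wolff \<beta> \<gamma> f x \<and> ennreal (v x) = ennreal (c2 x) * wolff \<beta> \<gamma> h x"
    unfolding positive_solution_def locally_integrable_def f_def h_def by auto
  obtain C1 C2 where C1: "C1 > 0" "\<And>x. 1/C1 \<le> c1 x" and C2: "C2 > 0" "\<And>x. 1/C2 \<le> c2 x"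
    using \<open>double_bounded c1\<close> \<open>double_bounded c2\<close> unfolding double_bounded_def by blast
  have lower_u: "AE x in lebesgue. \<forall>T>0. norm x \<le> T \<longrightarrow> ball_integral f T \<noteq> top \<and>
      u x \<ge> (1/C1) * ((enn2real (ball_integral f T) / (4*T) powr d) powr k / 2)"
    unfolding d_def k_def using eqs
    by eventually_elim (rule solution_ge_ball_integral, auto simp: C1 less_imp_le u \<gamma> n)
  have lower_v: "AE x in lebesgue. \<forall>T>0. norm x \<le> T \<longrightarrow> ball_integral h T \<noteq> top \<and>
      v x \<ge> (1/C2) * ((enn2real (ball_integral h T) / (4*T) powr d) powr k / 2)"
    unfolding d_def k_def using eqs
    by eventually_elim (rule solution_ge_ball_integral, auto simp: C2 less_imp_le v \<gamma> n)
  note F_growth = ball_integral_finite_and_growth[OF lower_u[unfolded k_def] u C1(1) \<gamma>]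
  note G_growth = ball_integral_finite_and_growth[OF lower_v[unfolded k_def] v C2(1) \<gamma>]
  obtain K R0 where K: "K > 0" and R0: "R0 > 0"
    and upper: "\<And>R. R \<ge> R0 \<Longrightarrow> enn2real (ball_integral h R) \<le> K * R powr d"
    using G_growth(2) by blast
  define F where "F = (\<lambda>R. enn2real (ball_integral f R))"
  define G where "G = (\<lambda>R. enn2real (ball_integral h R))"
  have fm: "f \<in> borel_measurable lebesgue" unfolding f_def using vm by measurable
  have hm: "h \<in> borel_measurable lebesgue" unfolding h_def using um by measurable
  have "f y > 0" "h y > 0" if "y \<noteq> 0" for y
    using that u[of y] v[of y] by (simp_all add: f_def h_def)
  then have F_pos: "F R > 0" and G_pos: "G R > 0" if "R > 0" for R
    using ball_integral_pos[OF fm _ that] ball_integral_pos[OF hm _ that] F_growth(1)[of R] G_growth(1)[of R]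
    by (simp_all add: F_def G_def enn2real_positive_iff less_top)
  obtain A1 where A1: "A1 > 0" and F_step: "\<And>R. R > 0 \<Longrightarrow> G R > 0 \<Longrightarrow> ball_integral f R \<noteq> top \<Longrightarrow>
      F (R/2) + A1 * R powr (real DIM('a) + \<sigma>1 - d*k*q) * G R powr (q*k) \<le> F R"
  proof -
    have "AE y in lebesgue. \<forall>T>0. norm y \<le> T \<longrightarrow> v y \<ge> (1/C2) * ((G T / (4*T) powr d) powr k / 2)"
      using lower_v by eventually_elim (simp add: G_def)
    from ball_integral_doubling_step[OF vm q C2(1) this, of \<sigma>1] that show thesis
      unfolding F_def f_def by blast
  qed
  obtain A2 where A2: "A2 > 0" and G_step: "\<And>R. R > 0 \<Longrightarrow> F R > 0 \<Longrightarrow> ball_integral h R \<noteq> top \<Longrightarrow>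
      G (R/2) + A2 * R powr (real DIM('a) + \<sigma>2 - d*k*p) * F R powr (p*k) \<le> G R"
  proof -
    have "AE y in lebesgue. \<forall>T>0. norm y \<le> T \<longrightarrow> u y \<ge> (1/C1) * ((F T / (4*T) powr d) powr k / 2)"
      using lower_u by eventually_elim (simp add: F_def)
    from ball_integral_doubling_step[OF um p C1(1) this, of \<sigma>2] that show thesis
      unfolding G_def h_def by blast
  qed
  show False
  proof (rule coupled_doubling_contradiction[OF k p A1 A2 K R0])
    show "A1 * R powr (real DIM('a) + \<sigma>1 - d*k*q) * G R powr (q*k) \<le> F R" if "R \<ge> R0" for R
      using F_step[of R] G_pos[of R] F_growth(1)[of R] that R0 enn2real_nonneg[of "ball_integral f (R/2)"]
      unfolding F_def by linarith
    show "G (R/2) + A2 * R powr (real DIM('a) + \<sigma>2 - d*k*p) * F R powr (p*k) \<le> G R" if "R \<ge> R0" for R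
      using G_step[of R] F_pos[of R] G_growth(1)[of R] that R0 by simp
    show "G R \<le> K * R powr d" if "R \<ge> R0" for R
      using upper[OF that] by (simp add: G_def)
    show "p*q*k\<^sup>2 \<le> 1 \<and> real DIM('a) + \<sigma>2 - d*k*p + p*k*(real DIM('a) + \<sigma>1 - d*k*q) > d*(1 - p*q*k\<^sup>2) \<or>
        p*q*k\<^sup>2 > 1 \<and> real DIM('a) + \<sigma>2 - d*k*p + p*k*(real DIM('a) + \<sigma>1 - d*k*q) \<ge> 0"
      using exponent_condition[OF \<gamma> p \<sigma>1 \<sigma>2 cond] unfolding d_def k_def .
  qed (use G_pos in auto)
qed

theorem theorem2:
  fixes \<beta> \<gamma> p q \<sigma>1 \<sigma>2 :: real
    and c1 c2 u v :: "'a::euclidean_space \<Rightarrow> real"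
  assumes "DIM('a) \<ge> 3"
    and "\<beta> > 0" and "\<gamma> > 1" and "\<beta> * \<gamma> < real DIM('a)"
    and "p > 0" and "q > 0"
    and "\<sigma>1 > - (\<beta> * \<gamma>)" and "\<sigma>2 > - (\<beta> * \<gamma>)"
    and "p * q \<le> (\<gamma> - 1)\<^sup>2
         \<or> (p * q > (\<gamma> - 1)\<^sup>2 \<and>
            max (q0 \<beta> \<gamma> p q \<sigma>1 \<sigma>2) (p0 \<beta> \<gamma> p q \<sigma>1 \<sigma>2)
              > (real DIM('a) - \<beta> * \<gamma>) / (\<gamma> - 1))
         \<or> (\<gamma> \<le> 2 \<and> p * q > (\<gamma> - 1)\<^sup>2 \<and>
            max (q0 \<beta> \<gamma> p q \<sigma>1 \<sigma>2) (p0 \<beta> \<gamma> p q \<sigma>1 \<sigma>2)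
              = (real DIM('a) - \<beta> * \<gamma>) / (\<gamma> - 1))"
    and "double_bounded c1" and "double_bounded c2"
  shows "\<not> positive_solution \<beta> \<gamma> p q \<sigma>1 \<sigma>2 c1 c2 u v"
proof
  assume sol: "positive_solution \<beta> \<gamma> p q \<sigma>1 \<sigma>2 c1 c2 u v"
  \<comment> \<open>Exchanging \<open>(u, p, \<sigma>\<^sub>1, c\<^sub>1)\<close> with \<open>(v, q, \<sigma>\<^sub>2, c\<^sub>2)\<close> turns \<open>q\<^sub>0\<close> into \<open>p\<^sub>0\<close>.\<close>
  have sol_swapped: "positive_solution \<beta> \<gamma> q p \<sigma>2 \<sigma>1 c2 c1 v u"
    using sol unfolding positive_solution_def by auto
  have q0_eq: "q0 \<beta> \<gamma> p q \<sigma>1 \<sigma>2 = p0 \<beta> \<gamma> q p \<sigma>2 \<sigma>1"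
    unfolding p0_def q0_def by (simp add: mult.commute)
  from assms(9) have "p * q \<le> (\<gamma> - 1)\<^sup>2 \<or>
      (p * q > (\<gamma> - 1)\<^sup>2 \<and> p0 \<beta> \<gamma> p q \<sigma>1 \<sigma>2 \<ge> (real DIM('a) - \<beta> * \<gamma>) / (\<gamma> - 1)) \<or>
      (q * p > (\<gamma> - 1)\<^sup>2 \<and> p0 \<beta> \<gamma> q p \<sigma>2 \<sigma>1 \<ge> (real DIM('a) - \<beta> * \<gamma>) / (\<gamma> - 1))"
    unfolding q0_eq by (auto simp: max_def mult.commute split: if_splits)
  then show False
    using no_positive_solution_if_p0_large[OF assms(4,3,5,6,7,8) _ assms(10,11) sol]
      no_positive_solution_if_p0_large[OF assms(4,3,6,5,8,7) _ assms(11,10) sol_swapped]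
    by (auto simp: mult.commute)
qed

end
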